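(* Let $A$ and $B$ be 0-1 matrices of sizes $p\times q$ and $q\times r$ with $p\ge r$, and let $\ell\in[p]$. Let $T\subseteq\{0,1\}^q$ be a set of $\ell$ centers produced by a $2$-approximation algorithm for the $\ell$-center clustering of the rows of $A$, so that $\max_{i\in[p]}\min_{u\in T}\mathrm{ham}(A_{i*},u)\le 2\lambda(A,\ell,\mathrm{row})$. For each $i\in[p]$ let $cen_\ell(A_{i*})\in T$ be a center closest to $A_{i*}$ in Hamming distance (ties broken arbitrarily), and define $D_{ij}$, for $i\in[p]$, $j\in[r]$, to be the inner product of $cen_\ell(A_{i*})$ with the $j$-th column $B_{*j}$ of $B$. Let $C=AB$ be the arithmetic product. Then for all $1\le i\le p$ and $1\le j\le r$, $|C_{ij}-D_{ij}|\le 2\lambda(A,\ell,\mathrm{row})$.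
   Context: For a positive integer $r$, $[r]=\{1,\dots,r\}$. The arithmetic matrix product $C=AB$ has entries $C_{ij}=\sum_{h=1}^q A_{ih}B_{hj}$ (over the integers); the inner product of $a,b\in\{0,1\}^q$ is $\sum_h a_hb_h$. The Hamming distance $\mathrm{ham}(a,b)$ between $a,b\in\{0,1\}^q$ is the number of coordinates in which they differ. The $\ell$-center clustering problem for the rows of $A$ asks for a set $T$ of $\ell$ points of $\{0,1\}^q$ minimizing $\max_{i\in[p]}\min_{u\in T}\mathrm{ham}(A_{i*},u)$; this minimum value is denoted $\lambda(A,\ell,\mathrm{row})$, where $A_{i*}$ is the $i$-th row of $A$. *)

theory Defs
  imports Main
begin

text \<open>Vectors of {0,1}^q are functions nat => nat supported on {1..q} with values in {0,1}.
  Matrices are functions nat => nat => nat, indexed from 1.\<close>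

definition cube :: "nat \<Rightarrow> (nat \<Rightarrow> nat) set" where
  "cube q = {u. (\<forall>h\<in>{1..q}. u h \<in> {0,1}) \<and> (\<forall>h. h \<notin> {1..q} \<longrightarrow> u h = 0)}"

definition ham :: "nat \<Rightarrow> (nat \<Rightarrow> nat) \<Rightarrow> (nat \<Rightarrow> nat) \<Rightarrow> nat" where
  "ham q a b = card {h \<in> {1..q}. a h \<noteq> b h}"

definition row :: "(nat \<Rightarrow> nat \<Rightarrow> nat) \<Rightarrow> nat \<Rightarrow> nat \<Rightarrow> (nat \<Rightarrow> nat)" where
  "row A q i = (\<lambda>h. if h \<in> {1..q} then A i h else 0)"

definition col :: "(nat \<Rightarrow> nat \<Rightarrow> nat) \<Rightarrow> nat \<Rightarrow> nat \<Rightarrow> (nat \<Rightarrow> nat)" where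
  "col B q j = (\<lambda>h. if h \<in> {1..q} then B h j else 0)"

definition inner :: "nat \<Rightarrow> (nat \<Rightarrow> nat) \<Rightarrow> (nat \<Rightarrow> nat) \<Rightarrow> nat" where
  "inner q a b = (\<Sum>h=1..q. a h * b h)"

definition is01 :: "nat \<Rightarrow> nat \<Rightarrow> (nat \<Rightarrow> nat \<Rightarrow> nat) \<Rightarrow> bool" where
  "is01 m n M \<longleftrightarrow> (\<forall>i\<in>{1..m}. \<forall>j\<in>{1..n}. M i j \<in> {0,1})"

definition center_cost :: "(nat \<Rightarrow> nat \<Rightarrow> nat) \<Rightarrow> nat \<Rightarrow> nat \<Rightarrow> (nat \<Rightarrow> nat) set \<Rightarrow> nat" where
  "center_cost A p q T = Max ((\<lambda>i. Min ((\<lambda>u. ham q (row A q i) u) ` T)) ` {1..p})"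

definition lambda_row :: "(nat \<Rightarrow> nat \<Rightarrow> nat) \<Rightarrow> nat \<Rightarrow> nat \<Rightarrow> nat \<Rightarrow> nat" where
  "lambda_row A p q l = Min {center_cost A p q T | T. T \<subseteq> cube q \<and> card T = l}"

definition matmul :: "(nat \<Rightarrow> nat \<Rightarrow> nat) \<Rightarrow> (nat \<Rightarrow> nat \<Rightarrow> nat) \<Rightarrow> nat \<Rightarrow> nat \<Rightarrow> nat \<Rightarrow> nat" where
  "matmul A B q i j = (\<Sum>h=1..q. A i h * B h j)"

end

theory Submission
  imports Defs
begin

text \<open>Replacing a 0-1 row by another 0-1 vector changes its inner product with a 0-1 column
  by at most one per coordinate in which the two vectors differ, i.e. by at most their Hamming
  distance. For the closest center of a row that distance is at most the cost of the center set,
  which the 2-approximation bounds by twice the optimum.\<close>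

lemma row_in_cube:
  assumes "is01 p q A" and "i \<in> {1..p}"
  shows "row A q i \<in> cube q"
  using assms by (auto simp: cube_def row_def is01_def)

lemma col_in_cube:
  assumes "is01 q r B" and "j \<in> {1..r}"
  shows "col B q j \<in> cube q"
  using assms by (auto simp: cube_def col_def is01_def)

lemma matmul_eq_inner_row_col: "matmul A B q i j = inner q (row A q i) (col B q j)"
  by (simp add: matmul_def inner_def row_def col_def)

lemma abs_sum_diff_le_card:
  fixes f g :: "'a \<Rightarrow> nat"
  assumes "finite S" and "\<And>h. h \<in> S \<Longrightarrow> \<bar>int (f h) - int (g h)\<bar> \<le> (if P h then 1 else 0)"
  shows "\<bar>int (\<Sum>h\<in>S. f h) - int (\<Sum>h\<in>S. g h)\<bar> \<le> int (card {h \<in> S. P h})"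
proof -
  have "\<bar>int (\<Sum>h\<in>S. f h) - int (\<Sum>h\<in>S. g h)\<bar> = \<bar>\<Sum>h\<in>S. int (f h) - int (g h)\<bar>"
    by (simp add: sum_subtractf)
  also have "\<dots> \<le> (\<Sum>h\<in>S. \<bar>int (f h) - int (g h)\<bar>)"
    by (rule sum_abs)
  also have "\<dots> \<le> (\<Sum>h\<in>S. if P h then 1 else 0)"
    using assms(2) by (intro sum_mono) auto
  also have "\<dots> = int (card {h \<in> S. P h})"
    using assms(1) by (simp add: sum.If_cases Int_def)
  finally show ?thesis .
qed

lemma abs_inner_diff_le_ham:
  assumes "a \<in> cube q" and "c \<in> cube q" and "b \<in> cube q"
  shows "\<bar>int (inner q a b) - int (inner q c b)\<bar> \<le> int (ham q a c)"
  unfolding inner_def ham_def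
proof (rule abs_sum_diff_le_card)
  fix h assume "h \<in> {1..q}"
  then have "a h \<in> {0,1}" "c h \<in> {0,1}" "b h \<in> {0,1}"
    using assms by (auto simp: cube_def)
  then show "\<bar>int (a h * b h) - int (c h * b h)\<bar> \<le> (if a h \<noteq> c h then 1 else 0)"
    by auto
qed simp

lemma ham_closest_center_le_center_cost:
  assumes "finite T" and "i \<in> {1..p}" and "c \<in> T"
    and "\<forall>u\<in>T. ham q (row A q i) c \<le> ham q (row A q i) u"
  shows "ham q (row A q i) c \<le> center_cost A p q T"
proof -
  have "ham q (row A q i) c = Min ((\<lambda>u. ham q (row A q i) u) ` T)"
    using assms by (intro Min_eqI[symmetric]) auto
  also have "\<dots> \<le> center_cost A p q T"
    unfolding center_cost_def using assms(2) by (intro Max_ge) auto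
  finally show ?thesis .
qed

theorem lemma1:
  fixes A B :: "nat \<Rightarrow> nat \<Rightarrow> nat" and p q r l :: nat
    and T :: "(nat \<Rightarrow> nat) set" and cen :: "nat \<Rightarrow> (nat \<Rightarrow> nat)"
  assumes "is01 p q A" and "is01 q r B" and "p \<ge> r"
    and "l \<in> {1..p}"
    and "T \<subseteq> cube q" and "card T = l"
    and "center_cost A p q T \<le> 2 * lambda_row A p q l"
    and "\<forall>i\<in>{1..p}. cen i \<in> T \<and> (\<forall>u\<in>T. ham q (row A q i) (cen i) \<le> ham q (row A q i) u)"
    and "\<forall>i j. D i j = inner q (cen i) (col B q j)"
  shows "\<forall>i\<in>{1..p}. \<forall>j\<in>{1..r}.
           \<bar>int (matmul A B q i j) - int (D i j)\<bar> \<le> 2 * int (lambda_row A p q l)"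
proof (intro ballI)
  fix i j assume i: "i \<in> {1..p}" and j: "j \<in> {1..r}"
  have closest: "cen i \<in> T" "\<forall>u\<in>T. ham q (row A q i) (cen i) \<le> ham q (row A q i) u"
    using assms(8) i by auto
  have "finite T"
    using assms(4,6) by (auto intro: card_ge_0_finite)
  have "\<bar>int (matmul A B q i j) - int (D i j)\<bar> \<le> int (ham q (row A q i) (cen i))"
    unfolding matmul_eq_inner_row_col assms(9)[rule_format]
    using row_in_cube[OF assms(1) i] col_in_cube[OF assms(2) j] closest(1) assms(5)
    by (intro abs_inner_diff_le_ham) auto
  also have "ham q (row A q i) (cen i) \<le> center_cost A p q T"
    using \<open>finite T\<close> i closest by (rule ham_closest_center_le_center_cost)
  also have "\<dots> \<le> 2 * lambda_row A p q l"
    by (rule assms(7))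
  finally show "\<bar>int (matmul A B q i j) - int (D i j)\<bar> \<le> 2 * int (lambda_row A p q l)"
    by simp
qed

end
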